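(* Let $\alpha\in(0,1]$ and let $\mathcal{N}[\varphi]=\mathbb{E}[\varphi(\xi)]=\sup_{\mu\in\Theta}\mu[\varphi]$ be a sublinear expectation on $C_{b,Lip}(\mathbb{R})$ satisfying condition (H) below, with $\mathbb{E}[|\xi|^{1+\alpha}]<\infty$. Let $p_\xi(a)=\mathbb{E}[a\xi]$, $a\in\mathbb{R}$. Then for every $\phi\in C_b^{1,\alpha}(\mathbb{R})$ and every $\mu\in\Theta_\phi$, $$\big|E_\mu[\xi\phi'(\xi)-p_\xi(\phi'(\xi))]\big|\le 4[\phi']_\alpha\,\mathbb{E}[|\xi|^{1+\alpha}].$$
   Context: A sublinear expectation on $C_{b,Lip}(\mathbb{R})$ (bounded Lipschitz functions) is a monotone, positively homogeneous, constant-preserving, subadditive functional continuous from above along sequences decreasing to $0$; it is represented as $\mathcal{N}[\varphi]=\sup_{\mu\in\Theta}\mu[\varphi]$ for a weakly compact set $\Theta$ of Borel probability measures on $\mathbb{R}$, and is extended to other measurable functions by the same supremum. Notation: $\xi(x)=x$, $\mathbb{E}[\varphi(\xi)]=\mathcal{N}[\varphi]$, $E_\mu[\varphi(\xi)]=\int\varphi\,d\mu$, $\Theta_\phi=\{\mu\in\Theta:E_\mu[\phi(\xi)]=\mathbb{E}[\phi(\xi)]\}$. Condition (H): $\lim_{N\to\infty}\mathcal{N}[|x|1_{[|x|>N]}]=0$. $C_b^{1,\alpha}(\mathbb{R})$ is the set of bounded $C^1$ functions with bounded derivative whose derivative is $\alpha$-Hölder, and $[\phi']_\alpha=\sup_{x\ne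 y}|\phi'(x)-\phi'(y)|/|x-y|^\alpha$. *)

theory Defs
  imports "HOL-Probability.Probability"
begin

definition weak_conv_prob :: "(nat \<Rightarrow> real measure) \<Rightarrow> real measure \<Rightarrow> bool" where
  "weak_conv_prob Ms M \<longleftrightarrow>
     (\<forall>f :: real \<Rightarrow> real. continuous_on UNIV f \<longrightarrow> bounded (range f) \<longrightarrow>
        (\<lambda>n. integral\<^sup>L (Ms n) f) \<longlonglongrightarrow> integral\<^sup>L M f)"

text \<open>A weakly compact set of Borel probability measures on the reals
  (sequential compactness; the weak topology on probability measures on R is metrizable).\<close>
definition weakly_compact_probs :: "real measure set \<Rightarrow> bool" where
  "weakly_compact_probs Th \<longleftrightarrow>
     (\<forall>\<mu>\<in>Th. real_distribution \<mu>) \<and>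
     (\<forall>Ms. (\<forall>n. Ms n \<in> Th) \<longrightarrow>
        (\<exists>(r::nat \<Rightarrow> nat) \<mu>. strict_mono r \<and> \<mu> \<in> Th \<and> weak_conv_prob (Ms \<circ> r) \<mu>))"

definition sublinE :: "real measure set \<Rightarrow> (real \<Rightarrow> real) \<Rightarrow> ereal" where
  "sublinE Th f = (SUP \<mu>\<in>Th. ereal (integral\<^sup>L \<mu> f))"

definition sublinE_nn :: "real measure set \<Rightarrow> (real \<Rightarrow> real) \<Rightarrow> ennreal" where
  "sublinE_nn Th f = (SUP \<mu>\<in>Th. \<integral>\<^sup>+ x. ennreal (f x) \<partial>\<mu>)"

definition condH :: "real measure set \<Rightarrow> bool" where
  "condH Th \<longleftrightarrow>
     ((\<lambda>N::real. sublinE_nn Th (\<lambda>x. \<bar>x\<bar> * indicator {y. \<bar>y\<bar> > N} x)) \<longlongrightarrow> 0) at_top"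

definition p_xi :: "real measure set \<Rightarrow> real \<Rightarrow> real" where
  "p_xi Th a = real_of_ereal (sublinE Th (\<lambda>x. a * x))"

definition Theta_phi :: "real measure set \<Rightarrow> (real \<Rightarrow> real) \<Rightarrow> real measure set" where
  "Theta_phi Th \<phi> = {\<mu>\<in>Th. ereal (integral\<^sup>L \<mu> \<phi>) = sublinE Th \<phi>}"

definition C_b_1_alpha :: "real \<Rightarrow> (real \<Rightarrow> real) set" where
  "C_b_1_alpha \<alpha> = {\<phi>. (\<forall>x. \<phi> differentiable at x) \<and> continuous_on UNIV (deriv \<phi>) \<and>
      bounded (range \<phi>) \<and> bounded (range (deriv \<phi>)) \<and>
      (\<exists>C. \<forall>x y. \<bar>deriv \<phi> x - deriv \<phi> y\<bar> \<le> C * \<bar>x - y\<bar> powr \<alpha>)}"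

definition holder_seminorm :: "real \<Rightarrow> (real \<Rightarrow> real) \<Rightarrow> real" where
  "holder_seminorm \<alpha> g = (SUP (x, y)\<in>{(x, y). x \<noteq> y}. \<bar>g x - g y\<bar> / \<bar>x - y\<bar> powr \<alpha>)"

end

theory Submission imports Defs begin

(* Write c = \<phi>'(0), m(\<nu>) for the mean of \<nu> and H = [\<phi>']_\<alpha>, M = E[|\<xi>|^(1+\<alpha>)].
  Splitting  x \<phi>'(x) - p(\<phi>'(x)) = (c x - p(c)) + x (\<phi>'(x) - c) - (p(\<phi>'(x)) - p(c)),
  the first term integrates to c m(\<mu>) - p(c), which lies in [-2HM, 0]: by the Hoelder Taylor
  expansion E_\<nu>[\<phi>] = \<phi>(0) + c m(\<nu>) up to H M, so the maximality of \<mu> for \<phi> forces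
  c m(\<nu>) <= c m(\<mu>) + 2HM for all \<nu>.  The second term is at most H|x|^(1+\<alpha>) pointwise.  The third
  is bounded by K H E_\<mu>[|\<xi>|^\<alpha>], because p = sup_\<nu> a m(\<nu>) is K-Lipschitz for any bound
  K of |m(\<nu>)|; Young's inequality gives |m(\<nu>)| E_\<mu>[|\<xi>|^\<alpha>] <= M, so K can be chosen
  with K E_\<mu>[|\<xi>|^\<alpha>] <= M. *)

lemma holder_seminorm_bound:
  fixes g :: "real \<Rightarrow> real"
  assumes "\<And>x y. \<bar>g x - g y\<bar> \<le> C * \<bar>x - y\<bar> powr \<alpha>"
  shows "\<bar>g x - g y\<bar> \<le> holder_seminorm \<alpha> g * \<bar>x - y\<bar> powr \<alpha>"
proof (cases "x = y")
  case False
  let ?q = "\<lambda>(x, y). \<bar>g x - g y\<bar> / \<bar>x - y\<bar> powr \<alpha>"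
  have "bdd_above (?q ` {(x, y). x \<noteq> y})"
    using assms by (intro bdd_aboveI2[of _ _ C]) (auto simp: divide_le_eq)
  then have "?q (x, y) \<le> holder_seminorm \<alpha> g"
    unfolding holder_seminorm_def using False by (intro cSUP_upper) auto
  then show ?thesis
    using False by (simp add: divide_le_eq mult.commute)
qed simp

lemma holder_const_nonneg:
  fixes g :: "real \<Rightarrow> real"
  assumes "\<And>x y. \<bar>g x - g y\<bar> \<le> H * \<bar>x - y\<bar> powr \<alpha>"
  shows "0 \<le> H"
proof -
  have "\<bar>g 1 - g 0\<bar> \<le> H"
    using assms[of 1 0] by simp
  then show ?thesis
    using abs_ge_zero order_trans by blast
qed

lemma abs_mult_holder_increment:
  fixes g :: "real \<Rightarrow> real"
  assumes "\<And>x y. \<bar>g x - g y\<bar> \<le> H * \<bar>x - y\<bar> powr \<alpha>"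
  shows "\<bar>x * (g x - g 0)\<bar> \<le> H * \<bar>x\<bar> powr (1 + \<alpha>)"
proof -
  have "\<bar>x * (g x - g 0)\<bar> \<le> \<bar>x\<bar> * (H * \<bar>x\<bar> powr \<alpha>)"
    using assms[of x 0] by (auto simp: abs_mult intro: mult_left_mono)
  also have "\<dots> = H * \<bar>x\<bar> powr (1 + \<alpha>)"
    by (cases "x = 0") (auto simp: powr_add)
  finally show ?thesis .
qed

lemma holder_taylor_remainder:
  fixes \<phi> :: "real \<Rightarrow> real"
  assumes diff: "\<And>x. \<phi> differentiable at x" and "0 \<le> \<alpha>"
    and holder: "\<And>x y. \<bar>deriv \<phi> x - deriv \<phi> y\<bar> \<le> H * \<bar>x - y\<bar> powr \<alpha>"
  shows "\<bar>\<phi> x - \<phi> 0 - deriv \<phi> 0 * x\<bar> \<le> H * \<bar>x\<bar> powr (1 + \<alpha>)"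
proof -
  have H: "0 \<le> H"
    using holder by (rule holder_const_nonneg)
  have D: "\<And>z. (\<phi> has_real_derivative deriv \<phi> z) (at z)"
    using diff by (simp add: DERIV_deriv_iff_real_differentiable)
  obtain z where z: "\<bar>z\<bar> \<le> \<bar>x\<bar>" "\<phi> x - \<phi> 0 = x * deriv \<phi> z"
  proof (cases x "0 :: real" rule: linorder_cases)
    case less
    from MVT2[OF less, of \<phi> "deriv \<phi>"] D obtain z where "x < z" "z < 0" "\<phi> 0 - \<phi> x = (0 - x) * deriv \<phi> z"
      by blast
    then show ?thesis by (intro that[of z]) (auto simp: algebra_simps)
  next
    case greater
    from MVT2[OF greater, of \<phi> "deriv \<phi>"] D obtain z where "0 < z" "z < x" "\<phi> x - \<phi> 0 = (x - 0) * deriv \<phi> z"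
      by blast
    then show ?thesis by (intro that[of z]) auto
  qed (use that in auto)
  have "\<bar>\<phi> x - \<phi> 0 - deriv \<phi> 0 * x\<bar> = \<bar>x\<bar> * \<bar>deriv \<phi> z - deriv \<phi> 0\<bar>"
    using z(2) by (simp add: abs_mult[symmetric] algebra_simps)
  also have "\<dots> \<le> \<bar>x\<bar> * (H * \<bar>x\<bar> powr \<alpha>)"
    using holder[of z 0] powr_mono2[OF \<open>0 \<le> \<alpha>\<close> _ z(1)] H
    by (intro mult_left_mono) (auto intro: order.trans mult_left_mono)
  also have "\<dots> = H * \<bar>x\<bar> powr (1 + \<alpha>)"
    by (cases "x = 0") (auto simp: powr_add)
  finally show ?thesis .
qed

lemma abs_powr_le_one_plus_powr:
  fixes x :: real
  assumes "0 \<le> \<beta>" "\<beta> \<le> \<gamma>"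
  shows "\<bar>x\<bar> powr \<beta> \<le> 1 + \<bar>x\<bar> powr \<gamma>"
proof (cases "\<bar>x\<bar> \<le> 1")
  case True
  then have "\<bar>x\<bar> powr \<beta> \<le> 1 powr \<beta>"
    using assms by (intro powr_mono2) auto
  then have "\<bar>x\<bar> powr \<beta> \<le> 1"
    by simp
  then show ?thesis
    using powr_ge_zero[of "\<bar>x\<bar>" \<gamma>] by linarith
next
  case False
  then have "\<bar>x\<bar> powr \<beta> \<le> \<bar>x\<bar> powr \<gamma>"
    using assms by (intro powr_mono) auto
  then show ?thesis by simp
qed

lemma Young_abs_powr:
  fixes x y \<alpha> :: real
  assumes "0 < \<alpha>"
  shows "\<bar>x\<bar> powr \<alpha> * \<bar>y\<bar> \<le> (\<alpha> * \<bar>x\<bar> powr (1 + \<alpha>) + \<bar>y\<bar> powr (1 + \<alpha>)) / (1 + \<alpha>)"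
proof -
  have "\<bar>x\<bar> powr \<alpha> * \<bar>y\<bar>
      \<le> (\<bar>x\<bar> powr \<alpha>) powr ((1 + \<alpha>) / \<alpha>) / ((1 + \<alpha>) / \<alpha>) + \<bar>y\<bar> powr (1 + \<alpha>) / (1 + \<alpha>)"
    by (rule Youngs_inequality) (use assms in \<open>auto simp: field_simps\<close>)
  also have "(\<bar>x\<bar> powr \<alpha>) powr ((1 + \<alpha>) / \<alpha>) = \<bar>x\<bar> powr (1 + \<alpha>)"
    using assms by (simp add: powr_powr)
  also have "\<bar>x\<bar> powr (1 + \<alpha>) / ((1 + \<alpha>) / \<alpha>) = \<alpha> * \<bar>x\<bar> powr (1 + \<alpha>) / (1 + \<alpha>)"
    using assms by (simp add: field_simps)
  finally show ?thesis
    by (simp add: add_divide_distrib)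
qed

context real_distribution
begin

lemma integrable_abs_powr_mono:
  assumes "0 \<le> \<beta>" "\<beta> \<le> \<gamma>" "integrable M (\<lambda>x. \<bar>x\<bar> powr \<gamma>)"
  shows "integrable M (\<lambda>x. \<bar>x\<bar> powr \<beta>)"
proof (rule Bochner_Integration.integrable_bound)
  show "integrable M (\<lambda>x. 1 + \<bar>x\<bar> powr \<gamma>)"
    using assms(3) by simp
  show "(\<lambda>x. \<bar>x\<bar> powr \<beta>) \<in> borel_measurable M"
    by simp
  have "norm (\<bar>x\<bar> powr \<beta>) \<le> norm (1 + \<bar>x\<bar> powr \<gamma>)" for x :: real
    using abs_powr_le_one_plus_powr[OF assms(1,2), of x] powr_ge_zero[of "\<bar>x\<bar>" \<gamma>] by simp
  then show "AE x in M. norm (\<bar>x\<bar> powr \<beta>) \<le> norm (1 + \<bar>x\<bar> powr \<gamma>)"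
    by simp
qed

lemma integrable_id_of_abs_powr:
  assumes "1 \<le> \<gamma>" "integrable M (\<lambda>x. \<bar>x\<bar> powr \<gamma>)"
  shows "integrable M (\<lambda>x. x)"
proof (rule integrable_abs_cancel)
  have "integrable M (\<lambda>x. \<bar>x\<bar> powr 1)"
    using integrable_abs_powr_mono[OF _ assms] by simp
  moreover have "(\<lambda>x::real. \<bar>x\<bar> powr 1) = (\<lambda>x. \<bar>x\<bar>)"
    by (simp add: fun_eq_iff)
  ultimately show "integrable M (\<lambda>x. \<bar>x\<bar>)"
    by (simp only:)
qed simp

end

lemma Young_moment_product:
  assumes "real_distribution \<mu>" "real_distribution \<nu>" "0 < \<alpha>"
    and int: "integrable \<mu> (\<lambda>x. \<bar>x\<bar> powr (1 + \<alpha>))" "integrable \<nu> (\<lambda>x. \<bar>x\<bar> powr (1 + \<alpha>))"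
    and bound: "(\<integral>x. \<bar>x\<bar> powr (1 + \<alpha>) \<partial>\<mu>) \<le> M" "(\<integral>x. \<bar>x\<bar> powr (1 + \<alpha>) \<partial>\<nu>) \<le> M"
  shows "\<bar>\<integral>y. y \<partial>\<nu>\<bar> * (\<integral>x. \<bar>x\<bar> powr \<alpha> \<partial>\<mu>) \<le> M"
proof -
  interpret \<mu>: real_distribution \<mu> by fact
  interpret \<nu>: real_distribution \<nu> by fact
  define A where "A = (\<integral>x. \<bar>x\<bar> powr \<alpha> \<partial>\<mu>)"
  have "A \<ge> 0"
    unfolding A_def by simp
  have int_\<alpha>: "integrable \<mu> (\<lambda>x. \<bar>x\<bar> powr \<alpha>)"
    using \<mu>.integrable_abs_powr_mono[where \<beta>=\<alpha>, OF _ _ int(1)] \<open>0 < \<alpha>\<close> by simp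
  have int_abs: "integrable \<nu> (\<lambda>y. \<bar>y\<bar>)"
    using \<nu>.integrable_id_of_abs_powr[OF _ int(2)] \<open>0 < \<alpha>\<close> by simp
  have pointwise: "\<bar>y\<bar> * A \<le> (\<alpha> * M + \<bar>y\<bar> powr (1 + \<alpha>)) / (1 + \<alpha>)" for y :: real
  proof -
    have "\<bar>y\<bar> * A = (\<integral>x. \<bar>x\<bar> powr \<alpha> * \<bar>y\<bar> \<partial>\<mu>)"
      unfolding A_def by (simp add: mult.commute)
    also have "\<dots> \<le> (\<integral>x. (\<alpha> * \<bar>x\<bar> powr (1 + \<alpha>) + \<bar>y\<bar> powr (1 + \<alpha>)) / (1 + \<alpha>) \<partial>\<mu>)"
      using Young_abs_powr[OF \<open>0 < \<alpha>\<close>] int_\<alpha> int(1) by (intro integral_mono) auto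
    also have "\<dots> = (\<alpha> * (\<integral>x. \<bar>x\<bar> powr (1 + \<alpha>) \<partial>\<mu>) + \<bar>y\<bar> powr (1 + \<alpha>)) / (1 + \<alpha>)"
      using int(1) by (simp add: \<mu>.prob_space[simplified])
    also have "\<dots> \<le> (\<alpha> * M + \<bar>y\<bar> powr (1 + \<alpha>)) / (1 + \<alpha>)"
      using bound(1) \<open>0 < \<alpha>\<close> by (intro divide_right_mono add_right_mono mult_left_mono) auto
    finally show ?thesis .
  qed
  have "\<bar>\<integral>y. y \<partial>\<nu>\<bar> * A \<le> (\<integral>y. \<bar>y\<bar> \<partial>\<nu>) * A"
    using \<open>A \<ge> 0\<close> by (intro mult_right_mono) auto
  also have "\<dots> = (\<integral>y. \<bar>y\<bar> * A \<partial>\<nu>)"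
    by simp
  also have "\<dots> \<le> (\<integral>y. (\<alpha> * M + \<bar>y\<bar> powr (1 + \<alpha>)) / (1 + \<alpha>) \<partial>\<nu>)"
    using pointwise int_abs int(2) by (intro integral_mono) auto
  also have "\<dots> = (\<alpha> * M + (\<integral>y. \<bar>y\<bar> powr (1 + \<alpha>) \<partial>\<nu>)) / (1 + \<alpha>)"
    using int(2) by (simp add: \<nu>.prob_space[simplified])
  also have "\<dots> \<le> (\<alpha> * M + M) / (1 + \<alpha>)"
    using bound(2) \<open>0 < \<alpha>\<close> by (intro divide_right_mono) auto
  also have "\<dots> = M"
    using \<open>0 < \<alpha>\<close> by (simp add: field_simps)
  finally show ?thesis
    by (simp only: A_def)
qed

lemma Taylor_integral_bound:
  fixes \<phi> :: "real \<Rightarrow> real"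
  assumes "real_distribution \<nu>" "0 \<le> \<alpha>"
    and diff: "\<And>x. \<phi> differentiable at x" and "bounded (range \<phi>)"
    and holder: "\<And>x y. \<bar>deriv \<phi> x - deriv \<phi> y\<bar> \<le> H * \<bar>x - y\<bar> powr \<alpha>"
    and int: "integrable \<nu> (\<lambda>x. \<bar>x\<bar> powr (1 + \<alpha>))"
  shows "\<bar>(\<integral>x. \<phi> x \<partial>\<nu>) - \<phi> 0 - deriv \<phi> 0 * (\<integral>x. x \<partial>\<nu>)\<bar>
           \<le> H * (\<integral>x. \<bar>x\<bar> powr (1 + \<alpha>) \<partial>\<nu>)"
proof -
  interpret real_distribution \<nu> by fact
  have "continuous_on UNIV \<phi>"
    using diff by (metis continuous_at_imp_continuous_on differentiable_imp_continuous_within)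
  moreover obtain B where "\<And>x. \<bar>\<phi> x\<bar> \<le> B"
    using \<open>bounded (range \<phi>)\<close> by (auto simp: bounded_iff)
  moreover have "\<phi> \<in> borel_measurable \<nu>"
    using \<open>continuous_on UNIV \<phi>\<close> by (intro measurable_finite_borel borel_measurable_continuous_onI)
  ultimately have int_\<phi>: "integrable \<nu> \<phi>"
    by (intro integrable_const_bound[where B=B]) auto
  have int_id: "integrable \<nu> (\<lambda>x. x)"
    using integrable_id_of_abs_powr[OF _ int] \<open>0 \<le> \<alpha>\<close> by simp
  have "\<bar>(\<integral>x. \<phi> x \<partial>\<nu>) - \<phi> 0 - deriv \<phi> 0 * (\<integral>x. x \<partial>\<nu>)\<bar>
      = \<bar>\<integral>x. \<phi> x - \<phi> 0 - deriv \<phi> 0 * x \<partial>\<nu>\<bar>"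
    using int_\<phi> int_id by (simp add: prob_space[simplified])
  also have "\<dots> \<le> (\<integral>x. H * \<bar>x\<bar> powr (1 + \<alpha>) \<partial>\<nu>)"
    using holder_taylor_remainder[OF diff \<open>0 \<le> \<alpha>\<close> holder] int_\<phi> int_id int
    by (intro integral_abs_bound_integral) auto
  finally show ?thesis
    by simp
qed

definition support_fun :: "real set \<Rightarrow> real \<Rightarrow> real" where
  "support_fun S a = (SUP s\<in>S. a * s)"

lemma support_fun_ge:
  assumes "bounded S" "s \<in> S"
  shows "a * s \<le> support_fun S a"
proof -
  obtain B where B: "\<And>s. s \<in> S \<Longrightarrow> \<bar>s\<bar> \<le> B"
    using assms(1) by (auto simp: bounded_iff)
  have "a * s \<le> \<bar>a\<bar> * B" if "s \<in> S" for s
  proof -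
    have "a * s \<le> \<bar>a\<bar> * \<bar>s\<bar>"
      by (metis abs_ge_self abs_mult)
    also have "\<dots> \<le> \<bar>a\<bar> * B"
      using B[OF that] by (rule mult_left_mono) simp
    finally show ?thesis .
  qed
  then have "bdd_above ((\<lambda>s. a * s) ` S)"
    by (rule bdd_aboveI2)
  with assms(2) show ?thesis
    unfolding support_fun_def by (rule cSUP_upper)
qed

lemma support_fun_le:
  assumes "S \<noteq> {}" "\<And>s. s \<in> S \<Longrightarrow> a * s \<le> B"
  shows "support_fun S a \<le> B"
  unfolding support_fun_def using assms by (rule cSUP_least)

lemma support_fun_lipschitz:
  assumes "S \<noteq> {}" and K: "\<And>s. s \<in> S \<Longrightarrow> \<bar>s\<bar> \<le> K"
  shows "\<bar>support_fun S a - support_fun S b\<bar> \<le> K * \<bar>a - b\<bar>"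
proof -
  have "bounded S"
    using K by (auto simp: bounded_iff)
  have one_sided: "support_fun S a \<le> support_fun S b + K * \<bar>a - b\<bar>" for a b
  proof (rule support_fun_le[OF \<open>S \<noteq> {}\<close>])
    fix s assume "s \<in> S"
    have "(a - b) * s \<le> \<bar>a - b\<bar> * \<bar>s\<bar>"
      by (metis abs_ge_self abs_mult)
    also have "\<dots> \<le> \<bar>a - b\<bar> * K"
      using K[OF \<open>s \<in> S\<close>] by (rule mult_left_mono) simp
    finally have "(a - b) * s \<le> K * \<bar>a - b\<bar>"
      by (simp only: mult.commute)
    moreover have "b * s \<le> support_fun S b"
      using \<open>bounded S\<close> \<open>s \<in> S\<close> by (rule support_fun_ge)
    moreover have "a * s = b * s + (a - b) * s"
      by (simp add: algebra_simps)
    ultimately show "a * s \<le> support_fun S b + K * \<bar>a - b\<bar>"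
      by linarith
  qed
  have "support_fun S b \<le> support_fun S a + K * \<bar>a - b\<bar>"
    using one_sided[of b a] by (simp only: abs_minus_commute)
  with one_sided[of a b] show ?thesis
    unfolding abs_le_iff by linarith
qed

lemma p_xi_eq_support_fun:
  assumes "Th \<noteq> {}" "bounded ((\<lambda>\<nu>. \<integral>x. x \<partial>\<nu>) ` Th)"
  shows "p_xi Th a = support_fun ((\<lambda>\<nu>. \<integral>x. x \<partial>\<nu>) ` Th) a"
proof -
  define m :: "real measure \<Rightarrow> real" where "m \<nu> = (\<integral>x. x \<partial>\<nu>)" for \<nu>
  let ?E = "SUP \<nu>\<in>Th. ereal (a * m \<nu>)"
  have "sublinE Th (\<lambda>x. a * x) = ?E"
    unfolding sublinE_def m_def by simp
  moreover have "\<bar>?E\<bar> \<noteq> \<infinity>"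
  proof -
    obtain \<nu>\<^sub>0 where "\<nu>\<^sub>0 \<in> Th"
      using assms(1) by blast
    have "a * m \<nu> \<le> support_fun (m ` Th) a" if "\<nu> \<in> Th" for \<nu>
      using assms(2) that unfolding m_def by (intro support_fun_ge) auto
    then have "?E \<le> ereal (support_fun (m ` Th) a)"
      by (intro SUP_least) simp
    moreover have "ereal (a * m \<nu>\<^sub>0) \<le> ?E"
      using \<open>\<nu>\<^sub>0 \<in> Th\<close> by (rule SUP_upper)
    ultimately show ?thesis
      by (cases ?E) auto
  qed
  then have "?E = ereal (SUP \<nu>\<in>Th. a * m \<nu>)"
    by (rule ereal_SUP[symmetric])
  ultimately show ?thesis
    unfolding p_xi_def support_fun_def m_def by (simp add: image_image)
qed

lemma integral_le_sublinE_nn: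
  fixes f :: "real \<Rightarrow> real"
  assumes "\<nu> \<in> Th" "f \<in> borel_measurable \<nu>" "\<And>x. 0 \<le> f x" "sublinE_nn Th f < \<infinity>"
  shows "integrable \<nu> f" and "(\<integral>x. f x \<partial>\<nu>) \<le> enn2real (sublinE_nn Th f)"
proof -
  have le: "(\<integral>\<^sup>+x. ennreal (f x) \<partial>\<nu>) \<le> sublinE_nn Th f"
    unfolding sublinE_nn_def using assms(1) by (rule SUP_upper)
  then show "integrable \<nu> f"
    using assms by (intro integrableI_bounded) auto
  have "(\<integral>x. f x \<partial>\<nu>) = enn2real (\<integral>\<^sup>+x. ennreal (f x) \<partial>\<nu>)"
    using assms by (intro integral_eq_nn_integral) auto
  also have "\<dots> \<le> enn2real (sublinE_nn Th f)"
    using le assms(4) by (intro enn2real_mono) auto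
  finally show "(\<integral>x. f x \<partial>\<nu>) \<le> enn2real (sublinE_nn Th f)" .
qed

lemma integral_le_Theta_phi:
  assumes "\<mu> \<in> Theta_phi Th \<phi>" "\<nu> \<in> Th"
  shows "(\<integral>x. \<phi> x \<partial>\<nu>) \<le> (\<integral>x. \<phi> x \<partial>\<mu>)"
proof -
  have "ereal (\<integral>x. \<phi> x \<partial>\<nu>) \<le> sublinE Th \<phi>"
    unfolding sublinE_def using assms(2) by (rule SUP_upper)
  with assms(1) have "ereal (\<integral>x. \<phi> x \<partial>\<nu>) \<le> ereal (\<integral>x. \<phi> x \<partial>\<mu>)"
    by (simp add: Theta_phi_def)
  then show ?thesis
    by simp
qed

lemma integrable_and_abs_integral_le:
  fixes f h :: "real \<Rightarrow> real"
  assumes "f \<in> borel_measurable M" "integrable M h" "\<And>x. \<bar>f x\<bar> \<le> h x"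
  shows "integrable M f" and "\<bar>\<integral>x. f x \<partial>M\<bar> \<le> (\<integral>x. h x \<partial>M)"
proof -
  have "norm (f x) \<le> norm (h x)" for x
    using assms(3)[of x] by simp
  then have "AE x in M. norm (f x) \<le> norm (h x)"
    by simp
  with assms(2,1) show "integrable M f"
    by (rule Bochner_Integration.integrable_bound)
  then show "\<bar>\<integral>x. f x \<partial>M\<bar> \<le> (\<integral>x. h x \<partial>M)"
    using assms(2,3) by (rule integral_abs_bound_integral)
qed

lemma integral_mult_holder_increment:
  fixes g :: "real \<Rightarrow> real"
  assumes "real_distribution \<mu>" "continuous_on UNIV g"
    and holder: "\<And>x y. \<bar>g x - g y\<bar> \<le> H * \<bar>x - y\<bar> powr \<alpha>"
    and int: "integrable \<mu> (\<lambda>x. \<bar>x\<bar> powr (1 + \<alpha>))"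
  shows "integrable \<mu> (\<lambda>x. x * (g x - g 0))"
    and "\<bar>\<integral>x. x * (g x - g 0) \<partial>\<mu>\<bar> \<le> H * (\<integral>x. \<bar>x\<bar> powr (1 + \<alpha>) \<partial>\<mu>)"
proof -
  interpret real_distribution \<mu> by fact
  have [measurable]: "g \<in> borel_measurable borel"
    using assms(2) by (rule borel_measurable_continuous_onI)
  have meas: "(\<lambda>x. x * (g x - g 0)) \<in> borel_measurable \<mu>"
    by measurable
  have int_bound: "integrable \<mu> (\<lambda>x. H * \<bar>x\<bar> powr (1 + \<alpha>))"
    using int by simp
  note bound = integrable_and_abs_integral_le[OF meas int_bound abs_mult_holder_increment[OF holder]]
  show "integrable \<mu> (\<lambda>x. x * (g x - g 0))"
    by (rule bound(1))
  show "\<bar>\<integral>x. x * (g x - g 0) \<partial>\<mu>\<bar> \<le> H * (\<integral>x. \<bar>x\<bar> powr (1 + \<alpha>) \<partial>\<mu>)"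
    using bound(2) by simp
qed

lemma integral_lipschitz_holder_increment:
  fixes \<sigma> g :: "real \<Rightarrow> real"
  assumes "real_distribution \<mu>" "continuous_on UNIV g"
    and holder: "\<And>x y. \<bar>g x - g y\<bar> \<le> H * \<bar>x - y\<bar> powr \<alpha>"
    and lip: "\<And>a b. \<bar>\<sigma> a - \<sigma> b\<bar> \<le> K * \<bar>a - b\<bar>"
    and int: "integrable \<mu> (\<lambda>x. \<bar>x\<bar> powr \<alpha>)"
  shows "integrable \<mu> (\<lambda>x. \<sigma> (g x) - \<sigma> (g 0))"
    and "\<bar>\<integral>x. \<sigma> (g x) - \<sigma> (g 0) \<partial>\<mu>\<bar> \<le> K * H * (\<integral>x. \<bar>x\<bar> powr \<alpha> \<partial>\<mu>)"
proof -
  interpret real_distribution \<mu> by fact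
  have "\<bar>\<sigma> 1 - \<sigma> 0\<bar> \<le> K"
    using lip[of 1 0] by simp
  then have "0 \<le> K"
    using abs_ge_zero order_trans by blast
  have "continuous_on UNIV \<sigma>"
    by (rule lipschitz_on_continuous_on[of K])
      (use \<open>0 \<le> K\<close> lip in \<open>simp add: lipschitz_on_def dist_real_def\<close>)
  then have [measurable]: "\<sigma> \<in> borel_measurable borel"
    by (rule borel_measurable_continuous_onI)
  have [measurable]: "g \<in> borel_measurable borel"
    using assms(2) by (rule borel_measurable_continuous_onI)
  have pointwise: "\<bar>\<sigma> (g x) - \<sigma> (g 0)\<bar> \<le> K * H * \<bar>x\<bar> powr \<alpha>" for x
  proof -
    have "\<bar>\<sigma> (g x) - \<sigma> (g 0)\<bar> \<le> K * \<bar>g x - g 0\<bar>"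
      by (rule lip)
    also have "\<dots> \<le> K * (H * \<bar>x\<bar> powr \<alpha>)"
      using holder[of x 0] \<open>0 \<le> K\<close> by (intro mult_left_mono) auto
    finally show ?thesis
      by (simp add: mult.assoc)
  qed
  have meas: "(\<lambda>x. \<sigma> (g x) - \<sigma> (g 0)) \<in> borel_measurable \<mu>"
    by measurable
  have int_bound: "integrable \<mu> (\<lambda>x. K * H * \<bar>x\<bar> powr \<alpha>)"
    using int by simp
  note bound = integrable_and_abs_integral_le[OF meas int_bound pointwise]
  show "integrable \<mu> (\<lambda>x. \<sigma> (g x) - \<sigma> (g 0))"
    by (rule bound(1))
  show "\<bar>\<integral>x. \<sigma> (g x) - \<sigma> (g 0) \<partial>\<mu>\<bar> \<le> K * H * (\<integral>x. \<bar>x\<bar> powr \<alpha> \<partial>\<mu>)"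
    using bound(2) by simp
qed

lemma mean_bound_with_moment:
  assumes dist: "\<And>\<nu>. \<nu> \<in> Th \<Longrightarrow> real_distribution \<nu>" and "\<mu> \<in> Th" "0 < \<alpha>"
    and int: "\<And>\<nu>. \<nu> \<in> Th \<Longrightarrow> integrable \<nu> (\<lambda>x. \<bar>x\<bar> powr (1 + \<alpha>))"
    and mom: "\<And>\<nu>. \<nu> \<in> Th \<Longrightarrow> (\<integral>x. \<bar>x\<bar> powr (1 + \<alpha>) \<partial>\<nu>) \<le> M"
  obtains K where "0 \<le> K" "\<And>\<nu>. \<nu> \<in> Th \<Longrightarrow> \<bar>\<integral>x. x \<partial>\<nu>\<bar> \<le> K"
    "K * (\<integral>x. \<bar>x\<bar> powr \<alpha> \<partial>\<mu>) \<le> M"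
proof -
  define A where "A = (\<integral>x. \<bar>x\<bar> powr \<alpha> \<partial>\<mu>)"
  have "0 \<le> A"
    unfolding A_def by simp
  have "0 \<le> (\<integral>x. \<bar>x\<bar> powr (1 + \<alpha>) \<partial>\<mu>)"
    by simp
  then have "0 \<le> M"
    using mom[OF \<open>\<mu> \<in> Th\<close>] by linarith
  show ?thesis
  proof (cases "A = 0")
    case True
    have "\<bar>\<integral>x. x \<partial>\<nu>\<bar> \<le> 1 + M" if "\<nu> \<in> Th" for \<nu>
    proof -
      interpret real_distribution \<nu>
        using dist[OF that] .
      have "\<bar>x\<bar> \<le> 1 + \<bar>x\<bar> powr (1 + \<alpha>)" for x :: real
        using abs_powr_le_one_plus_powr[of 1 "1 + \<alpha>" x] \<open>0 < \<alpha>\<close> by simp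
      then have "\<bar>\<integral>x. x \<partial>\<nu>\<bar> \<le> (\<integral>x. 1 + \<bar>x\<bar> powr (1 + \<alpha>) \<partial>\<nu>)"
        using int[OF that] by (intro integrable_and_abs_integral_le(2)) auto
      also have "\<dots> = 1 + (\<integral>x. \<bar>x\<bar> powr (1 + \<alpha>) \<partial>\<nu>)"
        using int[OF that] by (simp add: prob_space[simplified])
      finally show ?thesis
        using mom[OF that] by linarith
    qed
    with \<open>0 \<le> M\<close> True show ?thesis
      by (intro that[of "1 + M"]) (auto simp: A_def)
  next
    case False
    with \<open>0 \<le> A\<close> have "0 < A"
      by simp
    have "\<bar>\<integral>x. x \<partial>\<nu>\<bar> \<le> M / A" if "\<nu> \<in> Th" for \<nu>
      using Young_moment_product[OF dist[OF \<open>\<mu> \<in> Th\<close>] dist[OF that] \<open>0 < \<alpha>\<close>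
          int[OF \<open>\<mu> \<in> Th\<close>] int[OF that] mom[OF \<open>\<mu> \<in> Th\<close>] mom[OF that]] \<open>0 < A\<close>
      by (simp add: A_def pos_le_divide_eq)
    with \<open>0 \<le> M\<close> \<open>0 < A\<close> show ?thesis
      by (intro that[of "M / A"]) (auto simp: A_def)
  qed
qed

lemma maximizer_mean_gap:
  fixes \<phi> :: "real \<Rightarrow> real"
  assumes dist: "\<And>\<nu>. \<nu> \<in> Th \<Longrightarrow> real_distribution \<nu>" and "\<mu> \<in> Th" "\<nu> \<in> Th" "0 \<le> \<alpha>"
    and int: "\<And>\<nu>. \<nu> \<in> Th \<Longrightarrow> integrable \<nu> (\<lambda>x. \<bar>x\<bar> powr (1 + \<alpha>))"
    and mom: "\<And>\<nu>. \<nu> \<in> Th \<Longrightarrow> (\<integral>x. \<bar>x\<bar> powr (1 + \<alpha>) \<partial>\<nu>) \<le> M"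
    and diff: "\<And>x. \<phi> differentiable at x" and "bounded (range \<phi>)"
    and holder: "\<And>x y. \<bar>deriv \<phi> x - deriv \<phi> y\<bar> \<le> H * \<bar>x - y\<bar> powr \<alpha>"
    and opt: "(\<integral>x. \<phi> x \<partial>\<nu>) \<le> (\<integral>x. \<phi> x \<partial>\<mu>)"
  shows "deriv \<phi> 0 * (\<integral>x. x \<partial>\<nu>) \<le> deriv \<phi> 0 * (\<integral>x. x \<partial>\<mu>) + 2 * H * M"
proof -
  have "0 \<le> H"
    using holder by (rule holder_const_nonneg)
  have Taylor: "\<bar>(\<integral>x. \<phi> x \<partial>\<rho>) - \<phi> 0 - deriv \<phi> 0 * (\<integral>x. x \<partial>\<rho>)\<bar> \<le> H * M"
    if "\<rho> \<in> Th" for \<rho>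
  proof -
    note Taylor_integral_bound[OF dist[OF that] \<open>0 \<le> \<alpha>\<close> diff \<open>bounded (range \<phi>)\<close> holder int[OF that]]
    also have "H * (\<integral>x. \<bar>x\<bar> powr (1 + \<alpha>) \<partial>\<rho>) \<le> H * M"
      using mom[OF that] \<open>0 \<le> H\<close> by (rule mult_left_mono)
    finally show ?thesis .
  qed
  from Taylor[OF \<open>\<mu> \<in> Th\<close>] Taylor[OF \<open>\<nu> \<in> Th\<close>] opt show ?thesis
    by linarith
qed

lemma maximizer_deviation_bound:
  fixes \<phi> :: "real \<Rightarrow> real"
  assumes dist: "\<And>\<nu>. \<nu> \<in> Th \<Longrightarrow> real_distribution \<nu>" and "\<mu> \<in> Th" "0 < \<alpha>"
    and int: "\<And>\<nu>. \<nu> \<in> Th \<Longrightarrow> integrable \<nu> (\<lambda>x. \<bar>x\<bar> powr (1 + \<alpha>))"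
    and mom: "\<And>\<nu>. \<nu> \<in> Th \<Longrightarrow> (\<integral>x. \<bar>x\<bar> powr (1 + \<alpha>) \<partial>\<nu>) \<le> M"
    and diff: "\<And>x. \<phi> differentiable at x" and cont: "continuous_on UNIV (deriv \<phi>)"
    and bdd: "bounded (range \<phi>)"
    and holder: "\<And>x y. \<bar>deriv \<phi> x - deriv \<phi> y\<bar> \<le> H * \<bar>x - y\<bar> powr \<alpha>"
    and opt: "\<And>\<nu>. \<nu> \<in> Th \<Longrightarrow> (\<integral>x. \<phi> x \<partial>\<nu>) \<le> (\<integral>x. \<phi> x \<partial>\<mu>)"
  shows "\<bar>\<integral>x. x * deriv \<phi> x - p_xi Th (deriv \<phi> x) \<partial>\<mu>\<bar> \<le> 4 * H * M"
proof -
  define g where "g = deriv \<phi>"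
  define c where "c = g 0"
  define m :: "real measure \<Rightarrow> real" where "m \<nu> = (\<integral>x. x \<partial>\<nu>)" for \<nu>
  define \<sigma> where "\<sigma> = support_fun (m ` Th)"
  interpret \<mu>: real_distribution \<mu>
    using dist[OF \<open>\<mu> \<in> Th\<close>] .
  have int_\<alpha>: "integrable \<mu> (\<lambda>x. \<bar>x\<bar> powr \<alpha>)"
    using \<mu>.integrable_abs_powr_mono[where \<beta>=\<alpha>, OF _ _ int[OF \<open>\<mu> \<in> Th\<close>]] \<open>0 < \<alpha>\<close> by simp
  have int_id: "integrable \<mu> (\<lambda>x. x)"
    using \<mu>.integrable_id_of_abs_powr[OF _ int[OF \<open>\<mu> \<in> Th\<close>]] \<open>0 < \<alpha>\<close> by simp
  obtain K where K: "0 \<le> K" "\<And>\<nu>. \<nu> \<in> Th \<Longrightarrow> \<bar>m \<nu>\<bar> \<le> K" "K * (\<integral>x. \<bar>x\<bar> powr \<alpha> \<partial>\<mu>) \<le> M"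
    using mean_bound_with_moment[OF dist \<open>\<mu> \<in> Th\<close> \<open>0 < \<alpha>\<close> int mom] unfolding m_def by blast
  have "bounded (m ` Th)"
    using K(2) by (auto simp: bounded_iff)
  then have p_xi: "p_xi Th = \<sigma>"
    unfolding \<sigma>_def m_def using \<open>\<mu> \<in> Th\<close> by (intro ext p_xi_eq_support_fun) auto
  have lip: "\<bar>\<sigma> a - \<sigma> b\<bar> \<le> K * \<bar>a - b\<bar>" for a b
    unfolding \<sigma>_def using \<open>\<mu> \<in> Th\<close> K(2) by (intro support_fun_lipschitz) auto
  have "\<sigma> c \<le> c * m \<mu> + 2 * H * M"
    unfolding \<sigma>_def using \<open>\<mu> \<in> Th\<close> maximizer_mean_gap[OF dist \<open>\<mu> \<in> Th\<close> _ _ int mom diff bdd holder opt]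
    by (intro support_fun_le) (auto simp: c_def g_def m_def less_imp_le[OF \<open>0 < \<alpha>\<close>])
  moreover have "c * m \<mu> \<le> \<sigma> c"
    unfolding \<sigma>_def using \<open>bounded (m ` Th)\<close> \<open>\<mu> \<in> Th\<close> by (intro support_fun_ge) auto
  moreover note I2 = integral_mult_holder_increment[OF \<mu>.real_distribution_axioms cont holder int[OF \<open>\<mu> \<in> Th\<close>],
      folded g_def c_def]
  moreover note I3 = integral_lipschitz_holder_increment[OF \<mu>.real_distribution_axioms cont holder lip int_\<alpha>,
      folded g_def c_def]
  moreover have "K * H * (\<integral>x. \<bar>x\<bar> powr \<alpha> \<partial>\<mu>) \<le> H * M"
    using mult_left_mono[OF K(3) holder_const_nonneg[OF holder]] by (simp only: ac_simps)
  moreover have "H * (\<integral>x. \<bar>x\<bar> powr (1 + \<alpha>) \<partial>\<mu>) \<le> H * M"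
    using mom[OF \<open>\<mu> \<in> Th\<close>] holder_const_nonneg[OF holder] by (rule mult_left_mono)
  moreover have "(\<integral>x. x * g x - \<sigma> (g x) \<partial>\<mu>)
      = (c * m \<mu> - \<sigma> c) + (\<integral>x. x * (g x - c) \<partial>\<mu>) - (\<integral>x. \<sigma> (g x) - \<sigma> c \<partial>\<mu>)"
  proof -
    have "(\<lambda>x. x * g x - \<sigma> (g x)) = (\<lambda>x. (c * x - \<sigma> c) + x * (g x - c) - (\<sigma> (g x) - \<sigma> c))"
      by (simp add: fun_eq_iff algebra_simps)
    moreover have "(\<integral>x. c * x - \<sigma> c \<partial>\<mu>) = c * m \<mu> - \<sigma> c"
      using int_id by (simp add: m_def \<mu>.prob_space[simplified])
    moreover have int_lin: "integrable \<mu> (\<lambda>x. c * x - \<sigma> c)"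
      using int_id by simp
    ultimately show ?thesis
      by (simp only: Bochner_Integration.integral_add[OF int_lin I2(1)]
          Bochner_Integration.integral_diff[OF Bochner_Integration.integrable_add[OF int_lin I2(1)] I3(1)])
  qed
  ultimately show ?thesis
    unfolding p_xi g_def[symmetric] by linarith
qed

theorem lemma3p2:
  fixes \<alpha> :: real and Th :: "real measure set" and \<phi> :: "real \<Rightarrow> real" and \<mu> :: "real measure"
  assumes "0 < \<alpha>" and "\<alpha> \<le> 1"
    and "weakly_compact_probs Th"
    and "condH Th"
    and "sublinE_nn Th (\<lambda>x. \<bar>x\<bar> powr (1 + \<alpha>)) < \<infinity>"
    and "\<phi> \<in> C_b_1_alpha \<alpha>"
    and "\<mu> \<in> Theta_phi Th \<phi>"
  shows "\<bar>\<integral>x. (x * deriv \<phi> x - p_xi Th (deriv \<phi> x)) \<partial>\<mu>\<bar>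
           \<le> 4 * holder_seminorm \<alpha> (deriv \<phi>) * enn2real (sublinE_nn Th (\<lambda>x. \<bar>x\<bar> powr (1 + \<alpha>)))"
proof -
  have dist: "real_distribution \<nu>" if "\<nu> \<in> Th" for \<nu>
    using assms(3) that by (simp add: weakly_compact_probs_def)
  have moment: "integrable \<nu> (\<lambda>x. \<bar>x\<bar> powr (1 + \<alpha>))"
    "(\<integral>x. \<bar>x\<bar> powr (1 + \<alpha>) \<partial>\<nu>) \<le> enn2real (sublinE_nn Th (\<lambda>x. \<bar>x\<bar> powr (1 + \<alpha>)))"
    if "\<nu> \<in> Th" for \<nu>
  proof -
    have "(\<lambda>x. \<bar>x\<bar> powr (1 + \<alpha>)) \<in> borel_measurable \<nu>"
      using dist[OF that] by (simp add: real_distribution.measurable_finite_borel)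
    note bound = integral_le_sublinE_nn[OF that this _ assms(5)]
    show "integrable \<nu> (\<lambda>x. \<bar>x\<bar> powr (1 + \<alpha>))"
      by (rule bound(1)) simp
    show "(\<integral>x. \<bar>x\<bar> powr (1 + \<alpha>) \<partial>\<nu>) \<le> enn2real (sublinE_nn Th (\<lambda>x. \<bar>x\<bar> powr (1 + \<alpha>)))"
      by (rule bound(2)) simp
  qed
  obtain C where "\<And>x y. \<bar>deriv \<phi> x - deriv \<phi> y\<bar> \<le> C * \<bar>x - y\<bar> powr \<alpha>"
    using assms(6) by (auto simp: C_b_1_alpha_def)
  then have holder: "\<And>x y. \<bar>deriv \<phi> x - deriv \<phi> y\<bar> \<le> holder_seminorm \<alpha> (deriv \<phi>) * \<bar>x - y\<bar> powr \<alpha>"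
    by (rule holder_seminorm_bound)
  have "\<And>x. \<phi> differentiable at x" "continuous_on UNIV (deriv \<phi>)" "bounded (range \<phi>)"
    using assms(6) by (auto simp: C_b_1_alpha_def)
  moreover have "\<mu> \<in> Th"
    using assms(7) by (simp add: Theta_phi_def)
  moreover have "\<And>\<nu>. \<nu> \<in> Th \<Longrightarrow> (\<integral>x. \<phi> x \<partial>\<nu>) \<le> (\<integral>x. \<phi> x \<partial>\<mu>)"
    using assms(7) by (rule integral_le_Theta_phi)
  ultimately show ?thesis
    using maximizer_deviation_bound[OF dist _ assms(1) moment] holder by blast
qed

end
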